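(* Let $f\in K[z]$ be a polynomial of degree at least $2$. If $f$ has no wandering points in $J(f)\cap\mathsf{H}^1$, then every point of $J(f)\cap\mathsf{H}^1$ is eventually mapped to a repelling cycle.
   Context: $K$ is an algebraically closed field of characteristic $0$, complete with respect to a nontrivial nonarchimedean absolute value. $\mathsf{P}^1$ is the Berkovich projective line over $K$, $\mathsf{A}^1=\mathsf{P}^1\setminus\{\infty\}$, and $\mathsf{H}^1=\mathsf{P}^1\setminus(K\cup\{\infty\})$ (non-classical points). A polynomial extends continuously to $\mathsf{P}^1$; $\deg_\xi f$ is the local degree. $\mathcal{K}(f)$ is the set of $\xi\in\mathsf{A}^1$ with $f^n(\xi)\not\to\infty$, and $J(f)=\partial\mathcal{K}(f)$. A point of $J(f)\cap\mathsf{H}^1$ is wandering if it is not eventually periodic. A periodic point $\xi\in\mathsf{H}^1$ of period $m$ (and its cycle) is repelling if $\deg_\xi f^m>1$ and indifferent if $\deg_\xi f^m=1$. *)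

theory Defs
  imports "HOL-Analysis.Analysis" "HOL-Computational_Algebra.Polynomial"
begin

definition nonarch_abs :: "('k::field \<Rightarrow> real) \<Rightarrow> bool" where
  "nonarch_abs absv \<longleftrightarrow>
     (\<forall>x. absv x \<ge> 0) \<and> (\<forall>x. absv x = 0 \<longleftrightarrow> x = 0) \<and>
     (\<forall>x y. absv (x * y) = absv x * absv y) \<and>
     (\<forall>x y. absv (x + y) \<le> max (absv x) (absv y))"

definition nontrivial_abs :: "('k::field \<Rightarrow> real) \<Rightarrow> bool" where
  "nontrivial_abs absv \<longleftrightarrow> (\<exists>x. x \<noteq> 0 \<and> absv x \<noteq> 1)"

definition complete_abs :: "('k::field \<Rightarrow> real) \<Rightarrow> bool" where
  "complete_abs absv \<longleftrightarrow>
     (\<forall>X::nat \<Rightarrow> 'k. (\<forall>e>0. \<exists>N. \<forall>m\<ge>N. \<forall>n\<ge>N. absv (X m - X n) < e) \<longrightarrow>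
        (\<exists>L. \<forall>e>0. \<exists>N. \<forall>n\<ge>N. absv (X n - L) < e))"

definition alg_closed :: "'k::field itself \<Rightarrow> bool" where
  "alg_closed _ \<longleftrightarrow> (\<forall>p::'k poly. degree p \<ge> 1 \<longrightarrow> (\<exists>x. poly p x = 0))"

definition nonarch_field :: "('k::field_char_0 \<Rightarrow> real) \<Rightarrow> bool" where
  "nonarch_field absv \<longleftrightarrow> nonarch_abs absv \<and> nontrivial_abs absv \<and>
     complete_abs absv \<and> alg_closed TYPE('k)"

definition berkA1 :: "('k::field_char_0 \<Rightarrow> real) \<Rightarrow> ('k poly \<Rightarrow> real) set" where
  "berkA1 absv = {\<phi>. (\<forall>p. \<phi> p \<ge> 0) \<and>
      (\<forall>p q. \<phi> (p * q) = \<phi> p * \<phi> q) \<and>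
      (\<forall>p q. \<phi> (p + q) \<le> \<phi> p + \<phi> q) \<and>
      (\<forall>c. \<phi> [:c:] = absv c)}"

definition classical_pt :: "('k::field_char_0 \<Rightarrow> real) \<Rightarrow> 'k \<Rightarrow> ('k poly \<Rightarrow> real)" where
  "classical_pt absv a = (\<lambda>p. absv (poly p a))"

definition berkH1 :: "('k::field_char_0 \<Rightarrow> real) \<Rightarrow> ('k poly \<Rightarrow> real) set" where
  "berkH1 absv = berkA1 absv - range (classical_pt absv)"

definition berk_top :: "('k::field_char_0 \<Rightarrow> real) \<Rightarrow> ('k poly \<Rightarrow> real) topology" where
  "berk_top absv = subtopology
     (topology_generated_by {{\<phi>. \<phi> p \<in> U} | p U. open (U::real set)}) (berkA1 absv)"

definition fiter :: "'k::field_char_0 poly \<Rightarrow> nat \<Rightarrow> 'k poly" where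
  "fiter f n = ((\<lambda>g. pcompose f g) ^^ n) [:0, 1:]"

definition push :: "'k::field_char_0 poly \<Rightarrow> ('k poly \<Rightarrow> real) \<Rightarrow> ('k poly \<Rightarrow> real)" where
  "push g \<phi> = (\<lambda>p. \<phi> (pcompose p g))"

text \<open>Filled Julia set and Julia set; f^n(\<xi>) \<rightarrow> \<infinity> in P^1 iff \<xi>(f^n) \<rightarrow> \<infinity>.\<close>
definition filled_julia :: "('k::field_char_0 \<Rightarrow> real) \<Rightarrow> 'k poly \<Rightarrow> ('k poly \<Rightarrow> real) set" where
  "filled_julia absv f = {\<phi> \<in> berkA1 absv.
      \<not> filterlim (\<lambda>n. push (fiter f n) \<phi> [:0, 1:]) at_top sequentially}"

definition julia :: "('k::field_char_0 \<Rightarrow> real) \<Rightarrow> 'k poly \<Rightarrow> ('k poly \<Rightarrow> real) set" where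
  "julia absv f = (berk_top absv) frontier_of (filled_julia absv f)"

definition disk_deg :: "('k::field_char_0 \<Rightarrow> real) \<Rightarrow> 'k poly \<Rightarrow> 'k \<Rightarrow> real \<Rightarrow> nat" where
  "disk_deg absv g a t =
     (\<Sum>b\<in>{b. poly g b = poly g a \<and> absv (b - a) \<le> t}. order b (g - [:poly g a:]))"

text \<open>Local degree of g at a point \<xi> of H^1: the least degree of g on a closed
  disk whose Berkovich disk contains \<xi> (this equals the usual local degree:
  e.g. the degree of the reduction at type II points).\<close>
definition loc_deg :: "('k::field_char_0 \<Rightarrow> real) \<Rightarrow> 'k poly \<Rightarrow> ('k poly \<Rightarrow> real) \<Rightarrow> nat" where
  "loc_deg absv g \<xi> = Inf {disk_deg absv g a t | a t. t > 0 \<and> \<xi> [:- a, 1:] \<le> t}"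

definition eventually_periodic :: "'k::field_char_0 poly \<Rightarrow> ('k poly \<Rightarrow> real) \<Rightarrow> bool" where
  "eventually_periodic f \<xi> \<longleftrightarrow>
     (\<exists>n m. m > 0 \<and> push (fiter f (n + m)) \<xi> = push (fiter f n) \<xi>)"

definition wandering :: "('k::field_char_0 \<Rightarrow> real) \<Rightarrow> 'k poly \<Rightarrow> ('k poly \<Rightarrow> real) \<Rightarrow> bool" where
  "wandering absv f \<xi> \<longleftrightarrow> \<xi> \<in> julia absv f \<inter> berkH1 absv \<and> \<not> eventually_periodic f \<xi>"

definition period :: "'k::field_char_0 poly \<Rightarrow> ('k poly \<Rightarrow> real) \<Rightarrow> nat" where
  "period f \<xi> = (LEAST m. m > 0 \<and> push (fiter f m) \<xi> = \<xi>)"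

definition repelling_periodic ::
  "('k::field_char_0 \<Rightarrow> real) \<Rightarrow> 'k poly \<Rightarrow> ('k poly \<Rightarrow> real) \<Rightarrow> bool" where
  "repelling_periodic absv f \<xi> \<longleftrightarrow> \<xi> \<in> berkH1 absv \<and>
     (\<exists>m>0. push (fiter f m) \<xi> = \<xi>) \<and> loc_deg absv (fiter f (period f \<xi>)) \<xi> > 1"

end

theory Submission
  imports Defs "HOL-Real_Asymp.Real_Asymp"
begin

text \<open>A non-wandering point \<open>\<xi>\<close> of \<open>J(f) \<inter> H\<^sup>1\<close> lands after \<open>n\<close> steps on a point \<open>\<eta>\<close> of
  exact period \<open>p\<close>. If \<open>f\<^sup>p\<close> had local degree 1 at \<open>\<eta>\<close>, then \<open>\<eta>\<close> would lie in a disk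
  \<open>D(a, t)\<close> on which \<open>f\<^sup>p - f\<^sup>p(a) = (z - a) h\<close> with \<open>h\<close> zero-free on a larger open disk
  \<open>D(a, R)\<^sup>-\<close>; there \<open>f\<^sup>p\<close> acts on seminorms as the dilation by \<open>|h(a)|\<close>. Dilation by a factor
  \<open>> 1\<close> is impossible for a fixed non-classical point, since it would decrease its positive
  distance \<open>inf\<^sub>b \<eta>(z - b)\<close> to the classical points; otherwise \<open>D(a, R)\<^sup>-\<close> is
  \<open>f\<^sup>p\<close>-invariant, so its \<open>f\<^sup>n\<close>-preimage is an open neighbourhood of \<open>\<xi>\<close> inside the
  filled Julia set, contradicting \<open>\<xi> \<in> \<partial>K(f)\<close>.\<close>

lemma power_le_linear_imp_le_one:
  fixes r :: real
  assumes bound: "\<And>n. r ^ n \<le> real (n + 1)"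
  shows "r \<le> 1"
proof (rule ccontr)
  assume "\<not> r \<le> 1"
  then have "r > 1" by simp
  then have "((\<lambda>n. real (n + 1) / r ^ n) \<longlongrightarrow> 0) sequentially" by real_asymp
  then have "eventually (\<lambda>n. real (n + 1) / r ^ n < 1) sequentially"
    by (rule order_tendstoD) simp
  then obtain n where "real (n + 1) / r ^ n < 1"
    by (auto simp: eventually_sequentially)
  with bound[of n] \<open>r > 1\<close> show False by (simp add: divide_less_eq)
qed

lemma alg_closed_poly_induct [consumes 1, case_names const linear]:
  assumes "alg_closed TYPE('k::field)"
    and const: "\<And>c. P [:c:]"
    and linear: "\<And>s q. P q \<Longrightarrow> P ([:-s, 1:] * q)"
  shows "P (p :: 'k poly)"
proof (induction "degree p" arbitrary: p)
  case 0
  then show ?case using const by (metis degree_eq_zeroE)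
next
  case (Suc n)
  then obtain s where "poly p s = 0"
    using assms(1) unfolding alg_closed_def by (metis le_add1 plus_1_eq_Suc)
  then obtain q where p: "p = [:-s, 1:] * q"
    using poly_eq_0_iff_dvd by (blast elim: dvdE)
  with Suc.hyps(2) have "q \<noteq> 0" by auto
  then have "degree p = Suc (degree q)"
    unfolding p by (subst degree_mult_eq) auto
  then show ?case using Suc p linear by simp
qed

lemma diff_const_neq_0:
  fixes g :: "'a::comm_ring poly"
  assumes "degree g \<ge> 1"
  shows "g - [:c:] \<noteq> 0"
proof
  assume "g - [:c:] = 0"
  then have "g = [:c:]" by simp
  then show False using assms by simp
qed

lemma push_berkA1: "\<phi> \<in> berkA1 absv \<Longrightarrow> push g \<phi> \<in> berkA1 absv"
  unfolding berkA1_def push_def by (auto simp: pcompose_mult pcompose_add)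

lemma push_linear: "push g \<phi> [:-c, 1:] = \<phi> (g - [:c:])"
  by (simp add: push_def pcompose_pCons diff_conv_add_uminus add.commute)

lemma push_push: "push g (push h \<phi>) = push (pcompose g h) \<phi>"
  unfolding push_def by (simp add: pcompose_assoc)

lemma fiter_0: "fiter f 0 = [:0, 1:]"
  unfolding fiter_def by simp

lemma fiter_Suc: "fiter f (Suc n) = pcompose f (fiter f n)"
  unfolding fiter_def by simp

lemma fiter_add: "fiter f (n + m) = pcompose (fiter f n) (fiter f m)"
  by (induction n) (simp_all add: fiter_0 fiter_Suc pcompose_pCons pcompose_assoc)

lemma push_fiter_add: "push (fiter f (n + m)) \<phi> = push (fiter f m) (push (fiter f n) \<phi>)"
  by (simp add: push_push fiter_add[symmetric] add.commute)

lemma degree_fiter: "degree (fiter f n) = degree f ^ n"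
  by (induction n) (simp_all add: fiter_0 fiter_Suc degree_pcompose)

section \<open>Points of the Berkovich affine line\<close>

locale nonarch_absval =
  fixes absv :: "'k::field_char_0 \<Rightarrow> real"
  assumes nonarch: "nonarch_abs absv"
begin

lemma absv_nonneg: "absv x \<ge> 0"
  and absv_mult: "absv (x * y) = absv x * absv y"
  and absv_ultra: "absv (x + y) \<le> max (absv x) (absv y)"
  and absv_eq_0_iff [simp]: "absv x = 0 \<longleftrightarrow> x = 0"
  using nonarch unfolding nonarch_abs_def by auto

lemma absv_zero [simp]: "absv 0 = 0"
  by simp

lemma absv_one [simp]: "absv 1 = 1"
  using absv_mult[of 1 1] by (simp add: mult_cancel_left1 mult_cancel_left2)

lemma absv_minus [simp]: "absv (- x) = absv x"
proof -
  have "absv (-1) ^ 2 = 1" using absv_mult[of "-1" "-1"] by (simp add: power2_eq_square)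
  then have "absv (-1) = 1" using absv_nonneg[of "-1"] by (auto simp: power2_eq_1_iff)
  then show ?thesis using absv_mult[of "-1" x] by simp
qed

lemma absv_minus_commute: "absv (x - y) = absv (y - x)"
  using absv_minus[of "x - y"] by simp

lemma absv_of_nat_le_one: "absv (of_nat n) \<le> 1"
proof (induction n)
  case (Suc n)
  then show ?case using absv_ultra[of 1 "of_nat n"] by simp
qed simp

lemma classical_pt_berkA1: "classical_pt absv a \<in> berkA1 absv"
  unfolding classical_pt_def berkA1_def
  by (auto simp: absv_nonneg absv_mult)
     (smt (verit) absv_nonneg absv_ultra max.cobounded1 max.cobounded2)

end

locale seminorm_point = nonarch_absval +
  fixes \<phi> :: "'k::field_char_0 poly \<Rightarrow> real"
  assumes point: "\<phi> \<in> berkA1 absv"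
begin

lemma nonneg: "\<phi> p \<ge> 0"
  and mult: "\<phi> (p * q) = \<phi> p * \<phi> q"
  and triangle: "\<phi> (p + q) \<le> \<phi> p + \<phi> q"
  and const [simp]: "\<phi> [:c:] = absv c"
  using point unfolding berkA1_def by auto

lemma zero [simp]: "\<phi> 0 = 0"
  using const[of 0] by simp

lemma one [simp]: "\<phi> 1 = 1"
  using const[of 1] by (simp add: one_pCons)

lemma uminus [simp]: "\<phi> (- p) = \<phi> p"
  using mult[of "[:-1:]" p] by simp

lemma smult: "\<phi> (smult c p) = absv c * \<phi> p"
  using mult[of "[:c:]" p] by simp

lemma power: "\<phi> (p ^ n) = \<phi> p ^ n"
  by (induction n) (simp_all add: mult)

lemma sum_le: "\<phi> (sum f A) \<le> (\<Sum>x\<in>A. \<phi> (f x))"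
proof (induction A rule: infinite_finite_induct)
  case (insert x F)
  then show ?case using triangle[of "f x" "sum f F"] by simp
qed simp_all

text \<open>The triangle inequality bounds \<open>\<phi> ((p + q) ^ n)\<close> by \<open>n + 1\<close> binomial terms, each at most
  \<open>max (\<phi> p) (\<phi> q) ^ n\<close>, because \<open>absv\<close> is at most 1 on integers; taking \<open>n\<close>-th roots gives
  the strong triangle inequality.\<close>
lemma ultrametric: "\<phi> (p + q) \<le> max (\<phi> p) (\<phi> q)"
proof -
  define M where "M = max (\<phi> p) (\<phi> q)"
  have M: "M \<ge> 0" "\<phi> p \<le> M" "\<phi> q \<le> M" unfolding M_def using nonneg[of p] by auto
  have bound: "\<phi> (p + q) ^ n \<le> real (n + 1) * M ^ n" for n
  proof -
    have "\<phi> (p + q) ^ n = \<phi> (\<Sum>k\<le>n. of_nat (n choose k) * p ^ k * q ^ (n - k))"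
      by (simp only: power[symmetric] binomial_ring)
    also have "\<dots> \<le> (\<Sum>k\<le>n. \<phi> (of_nat (n choose k) * p ^ k * q ^ (n - k)))"
      by (rule sum_le)
    also have "\<dots> \<le> (\<Sum>k\<le>n. M ^ n)"
    proof (rule sum_mono)
      fix k assume "k \<in> {..n}"
      have "\<phi> (of_nat (n choose k) * p ^ k * q ^ (n - k))
          = absv (of_nat (n choose k)) * \<phi> p ^ k * \<phi> q ^ (n - k)"
        by (simp add: mult power of_nat_poly smult)
      also have "\<dots> \<le> 1 * M ^ k * M ^ (n - k)"
        using absv_of_nat_le_one M nonneg by (intro mult_mono power_mono) auto
      also have "\<dots> = M ^ n" using \<open>k \<in> {..n}\<close> by (simp add: power_add[symmetric])
      finally show "\<phi> (of_nat (n choose k) * p ^ k * q ^ (n - k)) \<le> M ^ n" .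
    qed
    finally show ?thesis by simp
  qed
  show ?thesis
  proof (cases "M = 0")
    case True
    then show ?thesis using triangle[of p q] M by (simp add: M_def)
  next
    case False
    then have "M > 0" using M by simp
    have "(\<phi> (p + q) / M) ^ n \<le> real (n + 1)" for n
      using bound[of n] \<open>M > 0\<close> by (simp add: power_divide divide_le_eq)
    then have "\<phi> (p + q) / M \<le> 1" by (rule power_le_linear_imp_le_one)
    then show ?thesis using \<open>M > 0\<close> by (simp add: M_def divide_le_eq)
  qed
qed

lemma ultrametric_diff: "\<phi> (p - q) \<le> max (\<phi> p) (\<phi> q)"
  using ultrametric[of p "- q"] by simp

lemma add_eq_right_if_less: "\<phi> p < \<phi> q \<Longrightarrow> \<phi> (p + q) = \<phi> q"
  using ultrametric[of p q] ultrametric[of "p + q" "- p"] by (auto simp: max_def split: if_splits)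

lemma diff_eq_left_if_less: "\<phi> p < \<phi> q \<Longrightarrow> \<phi> (q - p) = \<phi> q"
  using add_eq_right_if_less[of "- p" q] by (simp add: add.commute)

lemma eq_classical_pt_if_zero:
  assumes zero: "\<phi> [:-b, 1:] = 0"
  shows "\<phi> = classical_pt absv b"
proof
  fix p
  obtain q where q: "p - [:poly p b:] = [:-b, 1:] * q"
    using poly_eq_0_iff_dvd[of "p - [:poly p b:]" b] by (auto elim: dvdE)
  have q0: "\<phi> ([:-b, 1:] * q) = 0" by (simp only: mult zero mult_zero_left)
  have "p = [:poly p b:] + [:-b, 1:] * q" using q by (simp add: algebra_simps)
  then have "\<phi> p \<le> absv (poly p b)"
    using ultrametric[of "[:poly p b:]" "[:-b, 1:] * q"] q0 absv_nonneg[of "poly p b"] by simp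
  moreover have "[:poly p b:] = p - [:-b, 1:] * q" using q by (simp add: algebra_simps)
  then have "absv (poly p b) \<le> \<phi> p"
    using ultrametric_diff[of p "[:-b, 1:] * q"] q0 nonneg[of p] const[of "poly p b"] by simp
  ultimately show "\<phi> p = classical_pt absv b p" by (simp add: classical_pt_def)
qed

lemma linear_zero_if_zero:
  assumes "alg_closed TYPE('k)"
  shows "p \<noteq> 0 \<Longrightarrow> \<phi> p = 0 \<Longrightarrow> \<exists>b. \<phi> [:-b, 1:] = 0"
  using assms
proof (induction p rule: alg_closed_poly_induct)
  case (linear s q)
  have "\<phi> [:-s, 1:] = 0 \<or> \<phi> q = 0" using linear.prems(2) by (simp only: mult mult_eq_0_iff)
  moreover have "q \<noteq> 0" using linear.prems(1) by auto
  ultimately show ?case using linear.IH by blast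
qed simp

lemma classical_if_inf_zero:
  assumes "complete_abs absv" and small: "\<And>e. e > 0 \<Longrightarrow> \<exists>b. \<phi> [:-b, 1:] < e"
  shows "\<phi> \<in> range (classical_pt absv)"
proof -
  have "\<forall>n. \<exists>b. \<phi> [:-b, 1:] < inverse (Suc n)" by (intro allI small) simp
  then obtain b where b: "\<And>n. \<phi> [:-b n, 1:] < inverse (Suc n)" by metis
  have b_close: "max (\<phi> [:-b n, 1:]) (\<phi> [:-b m, 1:]) < e"
    if "inverse (Suc N) < e" "m \<ge> N" "n \<ge> N" for e m n N
  proof -
    have inv: "inverse (real (Suc k)) \<le> inverse (Suc N)" if "k \<ge> N" for k
      using that by (simp add: le_imp_inverse_le)
    show ?thesis using b[of m] b[of n] that(1) inv[OF that(2)] inv[OF that(3)] by linarith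
  qed
  have "\<forall>e>0. \<exists>N. \<forall>m\<ge>N. \<forall>n\<ge>N. absv (b m - b n) < e"
  proof (intro allI impI)
    fix e :: real assume "e > 0"
    then obtain N where N: "inverse (Suc N) < e" using reals_Archimedean by blast
    have "absv (b m - b n) < e" if "m \<ge> N" "n \<ge> N" for m n
      using le_less_trans[OF ultrametric_diff[of "[:-b n, 1:]" "[:-b m, 1:]"] b_close[OF N that]]
      by simp
    then show "\<exists>N. \<forall>m\<ge>N. \<forall>n\<ge>N. absv (b m - b n) < e" by blast
  qed
  then obtain L where L: "\<forall>e>0. \<exists>N. \<forall>n\<ge>N. absv (b n - L) < e"
    using \<open>complete_abs absv\<close> unfolding complete_abs_def by blast
  have "\<phi> [:-L, 1:] < e" if "e > 0" for e
  proof -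
    obtain N where N: "\<forall>n\<ge>N. absv (b n - L) < e" using L \<open>e > 0\<close> by blast
    obtain M where M: "inverse (Suc M) < e" using reals_Archimedean \<open>e > 0\<close> by blast
    define n where "n = max N M"
    have "\<phi> [:-L, 1:] \<le> max (\<phi> [:-b n, 1:]) (absv (b n - L))"
      using ultrametric[of "[:-b n, 1:]" "[:b n - L:]"] by simp
    moreover have "max (\<phi> [:-b n, 1:]) (absv (b n - L)) < e"
      using N b_close[OF M, of n n] by (simp add: n_def)
    ultimately show ?thesis by linarith
  qed
  then have "\<phi> [:-L, 1:] = 0" using nonneg[of "[:-L, 1:]"] by (metis less_irrefl order_le_less)
  then show ?thesis using eq_classical_pt_if_zero by blast
qed

lemma eq_poly_if_roots_far:
  assumes "alg_closed TYPE('k)" and near: "\<phi> [:-a, 1:] < R"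
  shows "p \<noteq> 0 \<Longrightarrow> \<forall>s. poly p s = 0 \<longrightarrow> absv (s - a) \<ge> R \<Longrightarrow> \<phi> p = absv (poly p a)"
  using assms(1)
proof (induction p rule: alg_closed_poly_induct)
  case (linear s q)
  have "q \<noteq> 0" using linear.prems(1) by auto
  moreover have "\<forall>t. poly q t = 0 \<longrightarrow> absv (t - a) \<ge> R" using linear.prems(2) by auto
  ultimately have IH: "\<phi> q = absv (poly q a)" by (rule linear.IH)
  have "absv (s - a) \<ge> R" using linear.prems(2) by (auto simp: algebra_simps)
  then have "\<phi> [:-a, 1:] < \<phi> [:a - s:]" using near by (simp add: absv_minus_commute)
  then have lin: "\<phi> [:-s, 1:] = absv (a - s)"
    using add_eq_right_if_less[of "[:-a, 1:]" "[:a - s:]"] by simp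
  have "poly ([:-s, 1:] * q) a = (a - s) * poly q a" by (simp add: algebra_simps)
  then show ?case by (simp only: mult IH lin absv_mult)
qed simp

end

lemma (in nonarch_absval) seminorm_pointI: "\<phi> \<in> berkA1 absv \<Longrightarrow> seminorm_point absv \<phi>"
  by (simp add: seminorm_point_def seminorm_point_axioms_def nonarch_absval_axioms)

lemma (in nonarch_absval) absv_poly_eq_if_roots_far:
  assumes "alg_closed TYPE('k)" and "absv (b - a) < R" and "p \<noteq> 0"
    and "\<forall>s. poly p s = 0 \<longrightarrow> absv (s - a) \<ge> R"
  shows "absv (poly p b) = absv (poly p a)"
proof -
  interpret b: seminorm_point absv "classical_pt absv b"
    by (rule seminorm_pointI[OF classical_pt_berkA1])
  show ?thesis using b.eq_poly_if_roots_far[OF assms(1) _ assms(3,4)] assms(2)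
    by (simp add: classical_pt_def)
qed

context seminorm_point
begin

lemma diff_le_if_roots_far:
  assumes ac: "alg_closed TYPE('k)" and near: "\<phi> [:-a, 1:] < R" and b: "absv (b - a) < R"
  shows "p \<noteq> 0 \<Longrightarrow> \<forall>s. poly p s = 0 \<longrightarrow> absv (s - a) \<ge> R \<Longrightarrow>
    \<phi> (p - [:poly p b:]) \<le> absv (poly p b) * \<phi> [:-b, 1:] / R"
  using ac
proof (induction p rule: alg_closed_poly_induct)
  case (const c)
  have "R > 0" using near nonneg[of "[:-a, 1:]"] by simp
  then show ?case using nonneg absv_nonneg by simp
next
  case (linear s q)
  have R: "R > 0" using near nonneg[of "[:-a, 1:]"] by simp
  define p where "p = [:-s, 1:] * q"
  have q0: "q \<noteq> 0" using linear.prems(1) by auto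
  have q_roots: "\<forall>t. poly q t = 0 \<longrightarrow> absv (t - a) \<ge> R" using linear.prems(2) by auto
  have IH: "\<phi> (q - [:poly q b:]) \<le> absv (poly q b) * \<phi> [:-b, 1:] / R"
    using linear.IH q0 q_roots by blast
  have "absv (s - a) \<ge> R" using linear.prems(2) by (auto simp: algebra_simps)
  moreover have "absv (s - a) \<le> max (absv (s - b)) (absv (b - a))"
    using absv_ultra[of "s - b" "b - a"] by simp
  ultimately have bs: "absv (b - s) \<ge> R" using b by (auto simp: absv_minus_commute max_def split: if_splits)
  have phq: "\<phi> q = absv (poly q b)"
    using eq_poly_if_roots_far[OF ac near q0 q_roots] absv_poly_eq_if_roots_far[OF ac b q0 q_roots]
    by simp
  have "poly p b = (b - s) * poly q b" unfolding p_def by (simp add: algebra_simps)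
  then have pb: "absv (poly p b) = absv (b - s) * absv (poly q b)" by (simp add: absv_mult)
  have eq: "p - [:poly p b:] = [:-b, 1:] * q + [:b - s:] * (q - [:poly q b:])"
    unfolding p_def by (simp add: algebra_simps) (simp add: smult_add_left[symmetric])
  have "\<phi> ([:-b, 1:] * q) = \<phi> [:-b, 1:] * absv (poly q b)" by (simp only: mult phq)
  also have "\<dots> \<le> \<phi> [:-b, 1:] * absv (poly q b) * (absv (b - s) / R)"
  proof -
    have one: "1 \<le> absv (b - s) / R" using bs R by simp
    show ?thesis using mult_left_mono[OF one, of "\<phi> [:-b, 1:] * absv (poly q b)"]
      nonneg[of "[:-b, 1:]"] absv_nonneg[of "poly q b"] by simp
  qed
  also have "\<dots> = absv (poly p b) * \<phi> [:-b, 1:] / R" by (simp add: pb)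
  finally have t1: "\<phi> ([:-b, 1:] * q) \<le> absv (poly p b) * \<phi> [:-b, 1:] / R" .
  have "\<phi> ([:b - s:] * (q - [:poly q b:])) = absv (b - s) * \<phi> (q - [:poly q b:])"
    by (simp only: mult const)
  also have "\<dots> \<le> absv (b - s) * (absv (poly q b) * \<phi> [:-b, 1:] / R)"
    using IH absv_nonneg by (intro mult_left_mono) auto
  also have "\<dots> = absv (poly p b) * \<phi> [:-b, 1:] / R" by (simp add: pb)
  finally have t2: "\<phi> ([:b - s:] * (q - [:poly q b:])) \<le> absv (poly p b) * \<phi> [:-b, 1:] / R" .
  show ?case
    using ultrametric[of "[:-b, 1:] * q" "[:b - s:] * (q - [:poly q b:])"] t1 t2
    unfolding p_def[symmetric] eq by simp
qed

lemma dilation_on_disk: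
  assumes ac: "alg_closed TYPE('k)" and near: "\<phi> [:-a, 1:] < R" and b: "absv (b - a) < R"
    and factor: "g - [:poly g a:] = [:-a, 1:] * h" and h0: "h \<noteq> 0"
    and far: "\<forall>s. poly h s = 0 \<longrightarrow> absv (s - a) \<ge> R"
  shows "\<phi> (g - [:poly g b:]) = absv (poly h a) * \<phi> [:-b, 1:]"
proof -
  define C where "C = absv (poly h a)"
  have R: "R > 0" using near nonneg[of "[:-a, 1:]"] by simp
  have "poly h a \<noteq> 0" using far R by force
  then have C: "C > 0" unfolding C_def using absv_nonneg[of "poly h a"] by (simp add: less_le)
  have phh: "\<phi> h = C" unfolding C_def by (rule eq_poly_if_roots_far[OF ac near h0 far])
  have hb: "absv (poly h b) = C" unfolding C_def by (rule absv_poly_eq_if_roots_far[OF ac b h0 far])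
  have "poly (g - [:poly g a:]) b = (b - a) * poly h b" unfolding factor by (simp add: algebra_simps)
  then have "poly g b = poly g a + (b - a) * poly h b" by (simp add: algebra_simps)
  then have "g - [:poly g b:] = (g - [:poly g a:]) - [:(b - a) * poly h b:]" by simp
  also have "\<dots> = [:-b, 1:] * h + [:b - a:] * (h - [:poly h b:])"
    unfolding factor by (simp add: algebra_simps) (simp add: smult_add_left[symmetric])
  finally have eq: "g - [:poly g b:] = [:-b, 1:] * h + [:b - a:] * (h - [:poly h b:])" .
  have t1: "\<phi> ([:-b, 1:] * h) = C * \<phi> [:-b, 1:]" by (simp only: mult phh mult.commute)
  have "\<phi> ([:b - a:] * (h - [:poly h b:])) = absv (b - a) * \<phi> (h - [:poly h b:])"
    by (simp only: mult const)
  also have "\<dots> \<le> absv (b - a) * (C * \<phi> [:-b, 1:] / R)"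
    using diff_le_if_roots_far[OF ac near b h0 far] hb absv_nonneg[of "b - a"]
    by (intro mult_left_mono) auto
  finally have t2: "\<phi> ([:b - a:] * (h - [:poly h b:])) \<le> absv (b - a) * (C * \<phi> [:-b, 1:] / R)" .
  show ?thesis
  proof (cases "\<phi> [:-b, 1:] = 0")
    case True
    then have "\<phi> (g - [:poly g b:]) \<le> 0"
      unfolding eq using ultrametric[of "[:-b, 1:] * h" "[:b - a:] * (h - [:poly h b:])"] t1 t2
      by simp
    then show ?thesis using True nonneg[of "g - [:poly g b:]"] by simp
  next
    case False
    then have pos: "\<phi> [:-b, 1:] > 0" using nonneg[of "[:-b, 1:]"] by simp
    have "absv (b - a) * (C * \<phi> [:-b, 1:] / R) < R * (C * \<phi> [:-b, 1:] / R)"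
      using b pos C R by (intro mult_strict_right_mono) auto
    then have "\<phi> ([:b - a:] * (h - [:poly h b:])) < \<phi> ([:-b, 1:] * h)" using t1 t2 R by simp
    then have "\<phi> ([:b - a:] * (h - [:poly h b:]) + [:-b, 1:] * h) = \<phi> ([:-b, 1:] * h)"
      by (rule add_eq_right_if_less)
    then show ?thesis unfolding eq C_def[symmetric] using t1 by (simp add: add.commute)
  qed
qed

lemma le_coeff_sum:
  assumes B: "\<phi> [:0, 1:] \<le> B"
  shows "\<phi> p \<le> (\<Sum>i\<le>degree p. absv (coeff p i) * B ^ i)"
proof -
  have "\<phi> p = \<phi> (\<Sum>i\<le>degree p. monom (coeff p i) i)" by (simp only: poly_as_sum_of_monoms)
  also have "\<dots> \<le> (\<Sum>i\<le>degree p. \<phi> (monom (coeff p i) i))" by (rule sum_le)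
  also have "\<dots> \<le> (\<Sum>i\<le>degree p. absv (coeff p i) * B ^ i)"
  proof (rule sum_mono)
    fix i
    have "\<phi> (monom (coeff p i) i) = absv (coeff p i) * \<phi> [:0, 1:] ^ i"
      by (simp only: monom_altdef smult power)
    also have "\<dots> \<le> absv (coeff p i) * B ^ i"
      using B nonneg absv_nonneg by (intro mult_left_mono power_mono) auto
    finally show "\<phi> (monom (coeff p i) i) \<le> absv (coeff p i) * B ^ i" .
  qed
  finally show ?thesis .
qed

text \<open>A fixed point of \<open>g\<close> in the disk cannot see \<open>g\<close> expand: otherwise a preimage \<open>b\<close> of a
  classical point \<open>c\<close> nearly realising \<open>\<delta> = inf\<^sub>b \<phi> (z - b)\<close> would satisfy
  \<open>\<phi> (z - b) = \<phi> (z - c) / |h(a)| < \<delta>\<close>; and \<open>\<delta> > 0\<close> because \<open>\<phi>\<close> is not classical.\<close>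
lemma fixed_point_dilation_le_one:
  assumes ac: "alg_closed TYPE('k)" and comp: "complete_abs absv"
    and nonclassical: "\<phi> \<notin> range (classical_pt absv)"
    and g: "degree g \<ge> 1" and fixed: "push g \<phi> = \<phi>" and near: "\<phi> [:-a, 1:] < R"
    and factor: "g - [:poly g a:] = [:-a, 1:] * h" and h0: "h \<noteq> 0"
    and far: "\<forall>s. poly h s = 0 \<longrightarrow> absv (s - a) \<ge> R"
  shows "absv (poly h a) \<le> 1"
proof (rule ccontr)
  define C where "C = absv (poly h a)"
  assume "\<not> absv (poly h a) \<le> 1"
  then have C: "C > 1" unfolding C_def by simp
  have dil: "\<phi> (g - [:poly g b:]) = C * \<phi> [:-b, 1:]" if "absv (b - a) < R" for b
    unfolding C_def using dilation_on_disk[OF ac near that factor h0 far] .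
  have fixed_lin: "\<phi> (g - [:c:]) = \<phi> [:-c, 1:]" for c
    using push_linear[of g \<phi> c] fixed by simp
  define \<delta> where "\<delta> = Inf (range (\<lambda>b. \<phi> [:-b, 1:]))"
  have bdd: "bdd_below (range (\<lambda>b. \<phi> [:-b, 1:]))"
    using nonneg by (intro bdd_belowI[of _ 0]) auto
  have \<delta>_le: "\<delta> \<le> \<phi> [:-b, 1:]" for b unfolding \<delta>_def by (rule cInf_lower[OF _ bdd]) auto
  have less_\<delta>: "\<exists>b. \<phi> [:-b, 1:] < x" if "\<delta> < x" for x
    using that cInf_less_iff[OF _ bdd] unfolding \<delta>_def by auto
  have "\<delta> > 0"
  proof (rule ccontr)
    assume "\<not> \<delta> > 0"
    then have "\<exists>b. \<phi> [:-b, 1:] < e" if "e > 0" for e using that less_\<delta> by force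
    then show False using classical_if_inf_zero[OF comp] nonclassical by blast
  qed
  then obtain c where c: "\<phi> [:-c, 1:] < C * \<delta>" using less_\<delta> C by force
  have "C * \<delta> \<le> C * \<phi> [:-a, 1:]" using \<delta>_le[of a] C by simp
  also have "\<dots> = \<phi> [:-poly g a, 1:]"
    using dil[of a] fixed_lin[of "poly g a"] near nonneg[of "[:-a, 1:]"] by simp
  finally have c_closer: "\<phi> [:-c, 1:] < \<phi> [:-poly g a, 1:]" using c by simp
  then have "\<phi> ([:-poly g a, 1:] - [:-c, 1:]) = \<phi> [:-poly g a, 1:]" by (rule diff_eq_left_if_less)
  then have dist_c: "absv (c - poly g a) = \<phi> [:-poly g a, 1:]" by simp
  obtain b where b: "poly g b = c" "absv (b - a) < R"
  proof -
    have "\<exists>b. poly (g - [:c:]) b = 0 \<and> absv (b - a) < R"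
    proof (rule ccontr)
      assume "\<not> ?thesis"
      then have "\<forall>s. poly (g - [:c:]) s = 0 \<longrightarrow> absv (s - a) \<ge> R" by force
      then have "\<phi> (g - [:c:]) = absv (c - poly g a)"
        using eq_poly_if_roots_far[OF ac near diff_const_neq_0[OF g]] absv_minus_commute by simp
      then show False using fixed_lin[of c] dist_c c_closer by simp
    qed
    then show ?thesis using that by auto
  qed
  have "C * \<phi> [:-b, 1:] < C * \<delta>" using dil[OF b(2)] fixed_lin[of c] b(1) c by simp
  then show False using \<delta>_le[of b] C by simp
qed

end

section \<open>Local degree one forces an invariant disk\<close>

context nonarch_absval
begin

lemma push_berkH1:
  assumes ac: "alg_closed TYPE('k)" and \<xi>: "\<xi> \<in> berkH1 absv" and g: "degree g \<ge> 1"
  shows "push g \<xi> \<in> berkH1 absv"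
proof -
  have \<xi>A: "\<xi> \<in> berkA1 absv" using \<xi> unfolding berkH1_def by auto
  interpret \<xi>: seminorm_point absv \<xi> by (rule seminorm_pointI[OF \<xi>A])
  have "push g \<xi> \<noteq> classical_pt absv c" for c
  proof
    assume "push g \<xi> = classical_pt absv c"
    then have "\<xi> (g - [:c:]) = 0" using push_linear[of g \<xi> c] by (simp add: classical_pt_def)
    then obtain b where "\<xi> [:-b, 1:] = 0"
      using \<xi>.linear_zero_if_zero[OF ac diff_const_neq_0[OF g]] by blast
    then show False using \<xi> \<xi>.eq_classical_pt_if_zero unfolding berkH1_def by blast
  qed
  then show ?thesis using push_berkA1[OF \<xi>A] unfolding berkH1_def by auto
qed

lemma disk_deg_le_one_factor:
  assumes g: "degree g \<ge> 1" and t: "t > 0" and deg: "disk_deg absv g a t \<le> 1"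
  obtains h R where "g - [:poly g a:] = [:-a, 1:] * h" "h \<noteq> 0" "R > t"
    "\<forall>s. poly h s = 0 \<longrightarrow> absv (s - a) \<ge> R"
proof -
  define G where "G = g - [:poly g a:]"
  have G0: "G \<noteq> 0" unfolding G_def by (rule diff_const_neq_0[OF g])
  obtain h where G: "G = [:-a, 1:] * h"
    using poly_eq_0_iff_dvd[of G a] unfolding G_def by (auto elim: dvdE)
  have h0: "h \<noteq> 0" using G G0 by auto
  define S where "S = {b. poly g b = poly g a \<and> absv (b - a) \<le> t}"
  have mult_S: "(\<Sum>b\<in>S. order b G) \<le> 1" using deg unfolding disk_deg_def S_def G_def .
  have S_finite: "finite S"
    by (rule finite_subset[OF _ poly_roots_finite[OF G0]]) (auto simp: S_def G_def)
  have order_le: "order b G \<le> 1" if "b \<in> S" for b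
    using member_le_sum[OF that _ S_finite, of "\<lambda>b. order b G"] mult_S by simp
  have aS: "a \<in> S" unfolding S_def using t by simp
  have "poly h a \<noteq> 0"
  proof
    assume "poly h a = 0"
    then have "order a h \<ge> 1" using order_gt_0_iff[OF h0, of a] by simp
    moreover have "order a G = order a [:-a, 1:] + order a h"
      unfolding G using G G0 by (intro order_mult) metis
    moreover have "order a [:-a, 1:] = 1" using order_power_n_n[of a 1] by simp
    ultimately show False using order_le[OF aS] by simp
  qed
  have roots_outside: "absv (s - a) > t" if "poly h s = 0" for s
  proof (rule ccontr)
    assume "\<not> absv (s - a) > t"
    moreover have "poly G s = 0" unfolding G using that by simp
    ultimately have sS: "s \<in> S" unfolding S_def G_def by auto
    have "s \<noteq> a" using that \<open>poly h a \<noteq> 0\<close> by auto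
    have order_pos: "order b G \<ge> 1" if "b \<in> S" for b
      using order_gt_0_iff[OF G0, of b] that unfolding S_def G_def by auto
    have "(\<Sum>b\<in>{a, s}. order b G) \<ge> 2"
      using order_pos[OF aS] order_pos[OF sS] \<open>s \<noteq> a\<close> by simp
    moreover have "(\<Sum>b\<in>{a, s}. order b G) \<le> (\<Sum>b\<in>S. order b G)"
      using aS \<open>s \<in> S\<close> S_finite by (intro sum_mono2) auto
    ultimately show False using mult_S by simp
  qed
  define F where "F = (\<lambda>s. absv (s - a)) ` {s. poly h s = 0}"
  have F_finite: "finite F" unfolding F_def using poly_roots_finite[OF h0] by simp
  define R where "R = (if F = {} then t + 1 else Min F)"
  have "R > t" unfolding R_def F_def using F_finite roots_outside by (auto simp: F_def)
  moreover have "\<forall>s. poly h s = 0 \<longrightarrow> absv (s - a) \<ge> R"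
    unfolding R_def F_def using F_finite[unfolded F_def] by (auto intro: Min_le)
  ultimately show ?thesis using that G h0 unfolding G_def by blast
qed

lemma disk_forward_invariant:
  assumes ac: "alg_closed TYPE('k)" and center: "absv (poly g a - a) < R"
    and factor: "g - [:poly g a:] = [:-a, 1:] * h" and h0: "h \<noteq> 0"
    and far: "\<forall>s. poly h s = 0 \<longrightarrow> absv (s - a) \<ge> R" and contracting: "absv (poly h a) \<le> 1"
    and \<phi>: "\<phi> \<in> berkA1 absv" "\<phi> [:-a, 1:] < R"
  shows "push g \<phi> [:-a, 1:] < R"
proof -
  interpret \<phi>: seminorm_point absv \<phi> by (rule seminorm_pointI[OF \<phi>(1)])
  have "\<phi> (g - [:poly g a:]) = absv (poly h a) * \<phi> [:-a, 1:]"
    using \<phi>.dilation_on_disk[OF ac \<phi>(2) _ factor h0 far, of a] \<phi>(2) \<phi>.nonneg[of "[:-a, 1:]"]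
    by simp
  also have "\<dots> \<le> \<phi> [:-a, 1:]"
    using contracting \<phi>.nonneg[of "[:-a, 1:]"] absv_nonneg by (simp add: mult_left_le_one_le)
  finally have "\<phi> (g - [:poly g a:]) < R" using \<phi>(2) by simp
  moreover have "push g \<phi> [:-a, 1:] = \<phi> ((g - [:poly g a:]) + [:poly g a - a:])"
  proof -
    have "[:poly g a - a:] = [:poly g a:] - [:a:]" by simp
    then have "g - [:a:] = (g - [:poly g a:]) + [:poly g a - a:]" by algebra
    then show ?thesis by (simp only: push_linear)
  qed
  ultimately show ?thesis
    using \<phi>.ultrametric[of "g - [:poly g a:]" "[:poly g a - a:]"] center by simp
qed

lemma invariant_disk_if_disk_deg_le_one:
  assumes ac: "alg_closed TYPE('k)" and comp: "complete_abs absv"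
    and g: "degree g \<ge> 1" and \<eta>: "\<eta> \<in> berkH1 absv" and fixed: "push g \<eta> = \<eta>"
    and t: "t > 0" "\<eta> [:-a, 1:] \<le> t" and deg: "disk_deg absv g a t \<le> 1"
  obtains R where "\<eta> [:-a, 1:] < R"
    "\<And>\<phi>. \<phi> \<in> berkA1 absv \<Longrightarrow> \<phi> [:-a, 1:] < R \<Longrightarrow> push g \<phi> [:-a, 1:] < R"
proof -
  obtain h R where factor: "g - [:poly g a:] = [:-a, 1:] * h" and h0: "h \<noteq> 0" and "R > t"
    and far: "\<forall>s. poly h s = 0 \<longrightarrow> absv (s - a) \<ge> R"
    using disk_deg_le_one_factor[OF g t(1) deg] by blast
  have near: "\<eta> [:-a, 1:] < R" using t(2) \<open>R > t\<close> by simp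
  have \<eta>A: "\<eta> \<in> berkA1 absv" using \<eta> unfolding berkH1_def by auto
  interpret \<eta>: seminorm_point absv \<eta> by (rule seminorm_pointI[OF \<eta>A])
  have contracting: "absv (poly h a) \<le> 1"
    using \<eta>.fixed_point_dilation_le_one[OF ac comp _ g fixed near factor h0 far] \<eta>
    unfolding berkH1_def by blast
  have "\<eta> [:-poly g a, 1:] = absv (poly h a) * \<eta> [:-a, 1:]"
    using \<eta>.dilation_on_disk[OF ac near _ factor h0 far, of a] push_linear[of g \<eta>] fixed near
      \<eta>.nonneg[of "[:-a, 1:]"] by simp
  also have "\<dots> \<le> \<eta> [:-a, 1:]"
    using contracting \<eta>.nonneg[of "[:-a, 1:]"] absv_nonneg by (simp add: mult_left_le_one_le)
  finally have "absv (poly g a - a) < R"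
    using \<eta>.ultrametric_diff[of "[:-a, 1:]" "[:-poly g a, 1:]"] near by simp
  then show ?thesis
    using that near disk_forward_invariant[OF ac _ factor h0 far contracting] by blast
qed

end

section \<open>Julia points landing on cycles\<close>

lemma loc_deg_attained:
  assumes "\<xi> [:0, 1:] \<ge> 0"
  obtains a t where "t > 0" "\<xi> [:-a, 1:] \<le> t" "loc_deg absv g \<xi> = disk_deg absv g a t"
proof -
  define D where "D = {disk_deg absv g a t | a t. t > 0 \<and> \<xi> [:-a, 1:] \<le> t}"
  have "disk_deg absv g 0 (\<xi> [:0, 1:] + 1) \<in> D"
    unfolding D_def using assms by force
  then have "Inf D \<in> D" using Inf_nat_def1 by blast
  then show ?thesis using that unfolding D_def loc_deg_def by blast
qed

context nonarch_absval
begin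

lemma bounded_orbit_in_filled_julia:
  assumes \<phi>: "\<phi> \<in> berkA1 absv" and m: "m > 0"
    and disk: "\<And>k. push (fiter f (n + k * m)) \<phi> [:-a, 1:] < R"
  shows "\<phi> \<in> filled_julia absv f"
proof -
  define B where "B = max R (absv a)"
  define M where "M = Max ((\<lambda>j. \<Sum>i\<le>degree (fiter f j). absv (coeff (fiter f j) i) * B ^ i) ` {..<m})"
  have bounded: "push (fiter f N) \<phi> [:0, 1:] \<le> M" if "N \<ge> n" for N
  proof -
    define k where "k = (N - n) div m"
    define j where "j = (N - n) mod m"
    have N: "N = (n + k * m) + j" unfolding k_def j_def using that by simp
    have "j < m" unfolding j_def using m by simp
    define \<psi> where "\<psi> = push (fiter f (n + k * m)) \<phi>"
    interpret \<psi>: seminorm_point absv \<psi> unfolding \<psi>_def by (rule seminorm_pointI[OF push_berkA1[OF \<phi>]])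
    have "\<psi> [:0, 1:] \<le> max (\<psi> [:-a, 1:]) (\<psi> [:a:])"
      using \<psi>.ultrametric[of "[:-a, 1:]" "[:a:]"] by simp
    then have \<psi>_B: "\<psi> [:0, 1:] \<le> B" using disk[of k, folded \<psi>_def] unfolding B_def by auto
    have "push (fiter f N) \<phi> [:0, 1:] = \<psi> (fiter f j)"
      unfolding N \<psi>_def push_fiter_add by (simp add: push_def pcompose_pCons)
    also have "\<dots> \<le> (\<Sum>i\<le>degree (fiter f j). absv (coeff (fiter f j) i) * B ^ i)"
      by (rule \<psi>.le_coeff_sum[OF \<psi>_B])
    also have "\<dots> \<le> M" unfolding M_def using \<open>j < m\<close> by (intro Max_ge) auto
    finally show ?thesis .
  qed
  have "\<not> filterlim (\<lambda>N. push (fiter f N) \<phi> [:0, 1:]) at_top sequentially"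
  proof
    assume "filterlim (\<lambda>N. push (fiter f N) \<phi> [:0, 1:]) at_top sequentially"
    then obtain N0 where N0: "\<And>N. N \<ge> N0 \<Longrightarrow> M + 1 \<le> push (fiter f N) \<phi> [:0, 1:]"
      unfolding filterlim_at_top eventually_sequentially by blast
    show False using N0[of "max N0 n"] bounded[of "max N0 n"] by simp
  qed
  then show ?thesis unfolding filled_julia_def using \<phi> by simp
qed

lemma not_in_julia_if_lands_in_invariant_disk:
  assumes \<xi>: "\<xi> \<in> berkA1 absv" and m: "m > 0"
    and invariant: "\<And>\<phi>. \<phi> \<in> berkA1 absv \<Longrightarrow> \<phi> [:-a, 1:] < R \<Longrightarrow> push (fiter f m) \<phi> [:-a, 1:] < R"
    and lands: "push (fiter f n) \<xi> [:-a, 1:] < R"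
  shows "\<xi> \<notin> julia absv f"
proof
  assume "\<xi> \<in> julia absv f"
  define U where "U = berkA1 absv \<inter> {\<phi>. \<phi> (pcompose [:-a, 1:] (fiter f n)) \<in> {..<R}}"
  have "openin (berk_top absv) U"
    unfolding U_def berk_top_def
    by (intro openin_subtopology_Int2 topology_generated_by_Basis) (use open_lessThan[of R] in blast)
  moreover have "U \<subseteq> filled_julia absv f"
  proof
    fix \<phi> assume "\<phi> \<in> U"
    then have \<phi>: "\<phi> \<in> berkA1 absv" "push (fiter f n) \<phi> [:-a, 1:] < R"
      unfolding U_def push_def by auto
    have "push (fiter f (n + k * m)) \<phi> [:-a, 1:] < R" for k
    proof (induction k)
      case (Suc k)
      have "push (fiter f (n + Suc k * m)) \<phi> = push (fiter f m) (push (fiter f (n + k * m)) \<phi>)"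
        by (simp only: push_fiter_add[symmetric]) (simp add: algebra_simps)
      then show ?case using invariant push_berkA1[OF \<phi>(1)] Suc by simp
    qed (simp add: \<phi>(2))
    then show "\<phi> \<in> filled_julia absv f" using bounded_orbit_in_filled_julia[OF \<phi>(1) m] by blast
  qed
  ultimately have "U \<subseteq> berk_top absv interior_of filled_julia absv f"
    by (rule interior_of_maximal[rotated])
  moreover have "\<xi> \<in> U" unfolding U_def using \<xi> lands by (simp add: push_def)
  ultimately show False using \<open>\<xi> \<in> julia absv f\<close> unfolding julia_def frontier_of_def by auto
qed

lemma repelling_if_julia_lands_on_cycle:
  assumes ac: "alg_closed TYPE('k)" and comp: "complete_abs absv" and f: "degree f \<ge> 1"
    and \<xi>: "\<xi> \<in> julia absv f \<inter> berkH1 absv"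
    and m: "m > 0" and cycle: "push (fiter f (n + m)) \<xi> = push (fiter f n) \<xi>"
  shows "repelling_periodic absv f (push (fiter f n) \<xi>)"
proof -
  define \<eta> where "\<eta> = push (fiter f n) \<xi>"
  have f_iter: "degree (fiter f k) \<ge> 1" for k using f by (simp add: degree_fiter one_le_power)
  have \<eta>: "\<eta> \<in> berkH1 absv" unfolding \<eta>_def using push_berkH1[OF ac _ f_iter] \<xi> by blast
  have periodic: "\<exists>m>0. push (fiter f m) \<eta> = \<eta>"
    using m cycle unfolding \<eta>_def push_fiter_add by blast
  define p where "p = period f \<eta>"
  have p: "p > 0" "push (fiter f p) \<eta> = \<eta>"
    using LeastI_ex[OF periodic] unfolding p_def period_def by auto
  have "loc_deg absv (fiter f p) \<eta> > 1"
  proof (rule ccontr)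
    assume "\<not> loc_deg absv (fiter f p) \<eta> > 1"
    have "\<eta> \<in> berkA1 absv" using \<eta> unfolding berkH1_def by auto
    then have "\<eta> [:0, 1:] \<ge> 0" unfolding berkA1_def by blast
    then obtain a t where t: "t > 0" "\<eta> [:-a, 1:] \<le> t"
      and "loc_deg absv (fiter f p) \<eta> = disk_deg absv (fiter f p) a t"
      by (rule loc_deg_attained)
    then have "disk_deg absv (fiter f p) a t \<le> 1" using \<open>\<not> loc_deg absv (fiter f p) \<eta> > 1\<close> by simp
    then obtain R where "\<eta> [:-a, 1:] < R"
      and "\<And>\<phi>. \<phi> \<in> berkA1 absv \<Longrightarrow> \<phi> [:-a, 1:] < R \<Longrightarrow> push (fiter f p) \<phi> [:-a, 1:] < R"
      using invariant_disk_if_disk_deg_le_one[OF ac comp f_iter \<eta> p(2) t] by blast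
    then have "\<xi> \<notin> julia absv f"
      using not_in_julia_if_lands_in_invariant_disk[OF _ p(1)] \<xi> unfolding \<eta>_def berkH1_def by blast
    then show False using \<xi> by blast
  qed
  then show ?thesis unfolding repelling_periodic_def \<eta>_def[symmetric] p_def using \<eta> periodic by blast
qed

end

theorem lemma2p2:
  fixes absv :: "'k::field_char_0 \<Rightarrow> real" and f :: "'k poly"
  assumes "nonarch_field absv"
    and "degree f \<ge> 2"
    and "\<forall>\<xi>. \<not> wandering absv f \<xi>"
  shows "\<forall>\<xi> \<in> julia absv f \<inter> berkH1 absv.
           \<exists>n. repelling_periodic absv f (push (fiter f n) \<xi>)"
proof
  fix \<xi> assume \<xi>: "\<xi> \<in> julia absv f \<inter> berkH1 absv"
  interpret nonarch_absval absv using assms(1) by unfold_locales (simp add: nonarch_field_def)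
  have ac: "alg_closed TYPE('k)" and comp: "complete_abs absv"
    using assms(1) unfolding nonarch_field_def by auto
  obtain n m where "m > 0" "push (fiter f (n + m)) \<xi> = push (fiter f n) \<xi>"
    using assms(3) \<xi> unfolding wandering_def eventually_periodic_def by blast
  then show "\<exists>n. repelling_periodic absv f (push (fiter f n) \<xi>)"
    using repelling_if_julia_lands_on_cycle[OF ac comp _ \<xi>] assms(2) by auto
qed

end
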